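(* Let $k,n$ be integers with $k\geq 3$ and $n\geq 2$, and let $c$ be an exact $k$-coloring of $\mathcal{B}_n$. Then $\mathcal{B}_n$ contains no rainbow induced copy of $\vee_2$ if and only if one of the following holds: (1) There exists a set $A\subseteq[n]$ with $|A|\leq n-2$ such that each of the three families $\mathcal{B}_{(A,[n])}$, $\mathcal{B}_n\setminus\mathcal{B}_{[A,[n]]}$, and $\{A\}$ is monochromatic, and no two sets from different ones of these families share a color; moreover, if $k=3$ the color of $[n]$ is unrestricted, and if $k=4$ then $[n]$ receives a color different from all colors used on $\mathcal{B}_{[\emptyset,[n])}$. (2) Exactly two colors appear on $\mathcal{B}_{[\emptyset,[n])}$, and $[n]$ receives a color distinct from these two.
   Context: $\mathcal{B}_n$ denotes the Boolean lattice of all subsets of $[n]$ ordered by inclusion. For $X\subseteq Y$: $\mathcal{B}_{[X,Y]}=\{Z: X\subseteq Z\subseteq Y\}$, $\mathcal{B}_{(X,Y]}=\{Z:X\subsetneq Z\subseteq Y\}$, $\mathcal{B}_{[X,Y)}=\{Z:X\subseteq Z\subsetneq Y\}$, $\mathcal{B}_{(X,Y)}=\{Z:X\subsetneq Z\subsetneq Y\}$. An exact $k$-coloring is a surjective map $\mathcal{B}_n\to[k]$. $\vee_2$ is the poset $\{X_0,X_1,X_2\}$ with $X_0<X_1$, $X_0<X_2$, $X_1,X_2$ incomparable; a rainbow induced copy of $\vee_2$ is three sets $X_0\subsetneq X_1$, $X_0\subsetneq X_2$ with $X_1,X_2$ incomparable and pairwise distinct colors. *)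

theory Defs
  imports Main
begin

definition Bool_lat :: "nat \<Rightarrow> nat set set" where
  "Bool_lat n = Pow {1..n}"

definition interval_cc :: "nat set \<Rightarrow> nat set \<Rightarrow> nat set set" where
  "interval_cc X Y = {Z. X \<subseteq> Z \<and> Z \<subseteq> Y}"
definition interval_oc :: "nat set \<Rightarrow> nat set \<Rightarrow> nat set set" where
  "interval_oc X Y = {Z. X \<subset> Z \<and> Z \<subseteq> Y}"
definition interval_co :: "nat set \<Rightarrow> nat set \<Rightarrow> nat set set" where
  "interval_co X Y = {Z. X \<subseteq> Z \<and> Z \<subset> Y}"
definition interval_oo :: "nat set \<Rightarrow> nat set \<Rightarrow> nat set set" where
  "interval_oo X Y = {Z. X \<subset> Z \<and> Z \<subset> Y}"

text \<open>An exact k-coloring of B_n: a map onto [k] (values outside B_n are irrelevant).\<close>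
definition exact_coloring :: "nat \<Rightarrow> nat \<Rightarrow> (nat set \<Rightarrow> nat) \<Rightarrow> bool" where
  "exact_coloring n k c \<longleftrightarrow> c ` Bool_lat n = {1..k}"

definition monochromatic :: "(nat set \<Rightarrow> nat) \<Rightarrow> nat set set \<Rightarrow> bool" where
  "monochromatic c F \<longleftrightarrow> (\<forall>X\<in>F. \<forall>Y\<in>F. c X = c Y)"

definition has_rainbow_V2 :: "nat \<Rightarrow> (nat set \<Rightarrow> nat) \<Rightarrow> bool" where
  "has_rainbow_V2 n c \<longleftrightarrow>
     (\<exists>X0\<in>Bool_lat n. \<exists>X1\<in>Bool_lat n. \<exists>X2\<in>Bool_lat n.
        X0 \<subset> X1 \<and> X0 \<subset> X2 \<and> \<not> X1 \<subseteq> X2 \<and> \<not> X2 \<subseteq> X1 \<and>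
        c X0 \<noteq> c X1 \<and> c X0 \<noteq> c X2 \<and> c X1 \<noteq> c X2)"

end

theory Submission
  imports Defs
begin

(*
  In a colouring without rainbow induced V_2, two incomparable sets of different colours force
  every common subset to take one of their two colours. Apply this to a proper subset W of [n]
  and a coatom [n] - {i} with i in W. If all coatoms share one colour, at most two colours occur
  below [n]. Otherwise the coatoms use exactly the colour gamma of the empty set and one further
  colour alpha, and a proper set of any third colour must be A = {i. [n] - {i} has colour gamma};
  then every set strictly between A and [n] has colour alpha and every set not containing A has
  colour gamma. Both configurations are clearly free of rainbow V_2, and the conditions on the
  colour of [n] come from counting the colours of an exact colouring.
*)

lemma exists_other_than_two:
  assumes "3 \<le> card S"
  shows "\<exists>x\<in>S. x \<noteq> a \<and> x \<noteq> b"
proof (rule ccontr)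
  assume "\<not> ?thesis"
  then have "card S \<le> card {a, b}"
    by (intro card_mono) auto
  also have "\<dots> \<le> 2"
    by (simp add: card_insert_if)
  finally show False
    using assms by simp
qed

lemma finite_interval_co: "finite N \<Longrightarrow> finite (interval_co X N)"
  by (rule finite_subset[of _ "Pow N"]) (auto simp: interval_co_def)

lemma monochromatic_image_subset:
  assumes "monochromatic c F"
  shows "\<exists>x. c ` F \<subseteq> {x}"
proof (cases "F = {}")
  case False
  then obtain X where "X \<in> F"
    by blast
  then have "c ` F \<subseteq> {c X}"
    using assms unfolding monochromatic_def by blast
  then show ?thesis ..
qed simp

definition rainbow_V2_free :: "nat set \<Rightarrow> (nat set \<Rightarrow> nat) \<Rightarrow> bool" where
  "rainbow_V2_free N c \<longleftrightarrow>
     (\<forall>X1 X2 Z. X1 \<subseteq> N \<longrightarrow> X2 \<subseteq> N \<longrightarrow> \<not> X1 \<subseteq> X2 \<longrightarrow> \<not> X2 \<subseteq> X1 \<longrightarrow>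
        c X1 \<noteq> c X2 \<longrightarrow> Z \<subseteq> X1 \<longrightarrow> Z \<subseteq> X2 \<longrightarrow> c Z = c X1 \<or> c Z = c X2)"

lemma has_rainbow_V2_iff: "has_rainbow_V2 n c \<longleftrightarrow> \<not> rainbow_V2_free {1..n} c"
  unfolding has_rainbow_V2_def rainbow_V2_free_def Bool_lat_def
  by (auto simp: psubset_eq) blast+

lemma rainbow_V2_freeD:
  assumes "rainbow_V2_free N c" "X1 \<subseteq> N" "X2 \<subseteq> N" "\<not> X1 \<subseteq> X2" "\<not> X2 \<subseteq> X1"
    "c X1 \<noteq> c X2" "Z \<subseteq> X1" "Z \<subseteq> X2"
  shows "c Z = c X1 \<or> c Z = c X2"
  using assms unfolding rainbow_V2_free_def by blast

lemma rainbow_V2_free_coatom: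
  assumes "rainbow_V2_free N c" "W \<subset> N" "i \<in> W" "c W \<noteq> c (N - {i})" "Z \<subseteq> W" "i \<notin> Z"
  shows "c Z = c W \<or> c Z = c (N - {i})"
proof (rule rainbow_V2_freeD[OF assms(1)])
  show "\<not> N - {i} \<subseteq> W"
    using assms(2,3) by blast
qed (use assms in auto)

(* Condition (1) without the bounds on card A and on the colour of the top set. *)
definition interval_split_coloring :: "nat set \<Rightarrow> (nat set \<Rightarrow> nat) \<Rightarrow> nat set \<Rightarrow> bool" where
  "interval_split_coloring N c A \<longleftrightarrow>
     monochromatic c (interval_oo A N) \<and> monochromatic c (Pow N - interval_cc A N) \<and>
     (\<forall>X\<in>interval_oo A N. \<forall>Y\<in>Pow N - interval_cc A N. c X \<noteq> c Y) \<and>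
     (\<forall>X\<in>interval_oo A N. c X \<noteq> c A) \<and> (\<forall>Y\<in>Pow N - interval_cc A N. c Y \<noteq> c A)"

lemma monochromatic_intervals_rainbow_V2_free:
  assumes above: "monochromatic c (interval_oo A N)"
    and outside: "monochromatic c (Pow N - interval_cc A N)"
  shows "rainbow_V2_free N c"
  unfolding rainbow_V2_free_def
proof (intro allI impI)
  fix X1 X2 Z
  assume X: "X1 \<subseteq> N" "X2 \<subseteq> N" "\<not> X1 \<subseteq> X2" "\<not> X2 \<subseteq> X1" "c X1 \<noteq> c X2"
    and Z: "Z \<subseteq> X1" "Z \<subseteq> X2"
  have not_both_above: False if "A \<subseteq> X1" "A \<subseteq> X2"
  proof -
    have "X1 \<in> interval_oo A N" "X2 \<in> interval_oo A N"
      using that X unfolding interval_oo_def by blast+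
    then show False
      using above X(5) unfolding monochromatic_def by blast
  qed
  have "Z \<in> Pow N - interval_cc A N"
    using not_both_above X Z unfolding interval_cc_def by blast
  moreover have "X1 \<in> Pow N - interval_cc A N \<or> X2 \<in> Pow N - interval_cc A N"
    using not_both_above X unfolding interval_cc_def by blast
  ultimately show "c Z = c X1 \<or> c Z = c X2"
    using outside unfolding monochromatic_def by blast
qed

lemma monochromatic_intervals_card_colors:
  assumes "monochromatic c (interval_oo A N)" "monochromatic c (Pow N - interval_cc A N)"
  shows "card (c ` interval_co {} N) \<le> 3"
proof -
  obtain \<alpha> \<gamma> where "c ` interval_oo A N \<subseteq> {\<alpha>}" "c ` (Pow N - interval_cc A N) \<subseteq> {\<gamma>}"
    using monochromatic_image_subset assms by metis
  moreover have "interval_co {} N \<subseteq> interval_oo A N \<union> (Pow N - interval_cc A N) \<union> {A}"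
    unfolding interval_oo_def interval_cc_def interval_co_def by blast
  ultimately have "c ` interval_co {} N \<subseteq> {\<alpha>, \<gamma>, c A}"
    by blast
  then have "card (c ` interval_co {} N) \<le> card {\<alpha>, \<gamma>, c A}"
    by (rule card_mono[rotated]) simp
  also have "\<dots> \<le> 3"
    by (simp add: card_insert_if)
  finally show ?thesis .
qed

lemma few_colors_rainbow_V2_free:
  assumes "finite N" "card (c ` interval_co {} N) \<le> 2"
  shows "rainbow_V2_free N c"
  unfolding rainbow_V2_free_def
proof (intro allI impI; rule ccontr)
  fix X1 X2 Z
  assume X: "X1 \<subseteq> N" "X2 \<subseteq> N" "\<not> X1 \<subseteq> X2" "\<not> X2 \<subseteq> X1" "c X1 \<noteq> c X2"
    and Z: "Z \<subseteq> X1" "Z \<subseteq> X2" and cZ: "\<not> (c Z = c X1 \<or> c Z = c X2)"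
  have "{c Z, c X1, c X2} \<subseteq> c ` interval_co {} N"
    using X Z unfolding interval_co_def by blast
  moreover have "finite (c ` interval_co {} N)"
    using finite_interval_co[OF assms(1)] by simp
  ultimately have "card {c Z, c X1, c X2} \<le> card (c ` interval_co {} N)"
    by (intro card_mono)
  then show False
    using assms(2) X(5) cZ by simp
qed

lemma coatoms_same_color:
  assumes free: "rainbow_V2_free N c" and coatoms: "\<forall>i\<in>N. c (N - {i}) = \<alpha>"
    and X: "X \<subset> N" "c X \<noteq> \<alpha>" and Y: "Y \<subset> N" "c Y \<noteq> \<alpha>"
  shows "c X = c Y"
proof (rule ccontr)
  assume XY: "c X \<noteq> c Y"
  have below: "c Z = c W \<or> c Z = \<alpha>" if "W \<subset> N" "c W \<noteq> \<alpha>" "Z \<subset> W" for W Z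
  proof -
    obtain i where "i \<in> W" "i \<notin> Z"
      using \<open>Z \<subset> W\<close> by blast
    then show ?thesis
      using rainbow_V2_free_coatom[OF free, of W i Z] that coatoms by auto
  qed
  show False
  proof (cases "X \<subseteq> Y \<or> Y \<subseteq> X")
    case True
    then show False
      using below[of Y X] below[of X Y] X Y XY by (auto simp: psubset_eq)
  next
    case False
    then have "{} \<subset> X" "{} \<subset> Y"
      by blast+
    then have "c {} = \<alpha>"
      using below[of X "{}"] below[of Y "{}"] X Y XY by metis
    then show False
      using rainbow_V2_freeD[OF free, of X Y "{}"] False X Y XY by auto
  qed
qed

lemma coatom_colors_differ:
  assumes free: "rainbow_V2_free N c" and three: "3 \<le> card (c ` interval_co {} N)"
  shows "\<exists>i\<in>N. \<exists>i'\<in>N. c (N - {i}) \<noteq> c (N - {i'})"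
proof (rule ccontr)
  assume same: "\<not> ?thesis"
  have P: "interval_co {} N = {Z. Z \<subset> N}"
    unfolding interval_co_def by blast
  obtain x where x: "x \<in> c ` interval_co {} N"
    using exists_other_than_two[OF three] by blast
  then have "N \<noteq> {}"
    unfolding P by blast
  then obtain i where i: "i \<in> N"
    by blast
  define \<alpha> where "\<alpha> = c (N - {i})"
  have coatoms: "\<forall>i'\<in>N. c (N - {i'}) = \<alpha>"
    using same i unfolding \<alpha>_def by blast
  obtain y where y: "y \<in> c ` interval_co {} N" "y \<noteq> \<alpha>"
    using exists_other_than_two[OF three, of \<alpha> \<alpha>] by blast
  obtain z where z: "z \<in> c ` interval_co {} N" "z \<noteq> \<alpha>" "z \<noteq> y"
    using exists_other_than_two[OF three, of \<alpha> y] by blast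
  from y z show False
    using coatoms_same_color[OF free coatoms] unfolding P by blast
qed

locale coatom_two_colors =
  fixes N :: "nat set" and c :: "nat set \<Rightarrow> nat" and j :: nat
  assumes free: "rainbow_V2_free N c"
    and j_mem: "j \<in> N"
    and coatom_j: "c (N - {j}) \<noteq> c {}"
    and coatom_colors: "\<And>i. i \<in> N \<Longrightarrow> c (N - {i}) = c {} \<or> c (N - {i}) = c (N - {j})"

lemma coatom_two_colorsI:
  assumes free: "rainbow_V2_free N c"
    and i: "i \<in> N" "i' \<in> N" "c (N - {i}) \<noteq> c (N - {i'})"
  shows "\<exists>j. coatom_two_colors N c j"
proof -
  have "c {} = c (N - {i}) \<or> c {} = c (N - {i'})"
    using rainbow_V2_free_coatom[OF free, of "N - {i}" i' "{}"] i by blast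
  then obtain j where j: "j \<in> N" "c (N - {j}) \<noteq> c {}"
    using i by metis
  have "c (N - {l}) = c {} \<or> c (N - {l}) = c (N - {j})" if l: "l \<in> N" for l
  proof (cases "l = j")
    case False
    with l have "N - {l} \<subset> N"
      by blast
    then show ?thesis
      using rainbow_V2_free_coatom[OF free, of "N - {l}" j "{}"] j l False by auto
  qed simp
  then show ?thesis
    using free j unfolding coatom_two_colors_def by blast
qed

context coatom_two_colors
begin

lemma third_color_set_eq:
  assumes X: "X \<subset> N" "c X \<noteq> c {}" "c X \<noteq> c (N - {j})"
  shows "X = {i\<in>N. c (N - {i}) = c {}}"
proof
  show "X \<subseteq> {i\<in>N. c (N - {i}) = c {}}"
  proof
    fix i assume "i \<in> X"
    with X(1) have "i \<in> N"
      by blast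
    with \<open>i \<in> X\<close> show "i \<in> {i\<in>N. c (N - {i}) = c {}}"
      using rainbow_V2_free_coatom[OF free X(1), of i "{}"] coatom_colors[of i] X by auto
  qed
  show "{i\<in>N. c (N - {i}) = c {}} \<subseteq> X"
  proof (rule ccontr)
    assume "\<not> ?thesis"
    then obtain i where i: "i \<in> N" "c (N - {i}) = c {}" "i \<notin> X"
      by blast
    have "j \<notin> X"
      using rainbow_V2_free_coatom[OF free X(1), of j "{}"] coatom_j X by auto
    then show False
      using rainbow_V2_free_coatom[OF free, of "N - {i}" j X] i j_mem coatom_j X by auto
  qed
qed

context
  fixes A :: "nat set"
  assumes A: "A \<subset> N" "c A \<noteq> c {}" "c A \<noteq> c (N - {j})"
begin

lemma coatom_color_empty_iff: "i \<in> N \<Longrightarrow> c (N - {i}) = c {} \<longleftrightarrow> i \<in> A"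
  using third_color_set_eq[OF A] by blast

lemma j_notin_A: "j \<notin> A"
  using coatom_color_empty_iff[OF j_mem] coatom_j by blast

lemma color_above_A:
  assumes X: "A \<subset> X" "X \<subset> N"
  shows "c X = c (N - {j})"
proof (rule ccontr)
  assume "c X \<noteq> c (N - {j})"
  moreover have "X \<noteq> A"
    using X by blast
  ultimately have cX: "c X = c {}"
    using third_color_set_eq[OF A] third_color_set_eq[OF X(2)] by blast
  obtain l where l: "l \<in> X" "l \<notin> A"
    using X by blast
  then have "c (N - {l}) = c (N - {j})"
    using coatom_color_empty_iff[of l] coatom_colors[of l] X by blast
  then show False
    using rainbow_V2_free_coatom[OF free X(2) l(1), of A] X l A coatom_j cX by auto
qed

lemma color_not_above_A:
  assumes X: "X \<subseteq> N" "\<not> A \<subseteq> X"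
  shows "c X = c {}"
proof (rule ccontr)
  assume "c X \<noteq> c {}"
  moreover have "X \<subset> N" "X \<noteq> A"
    using X A by blast+
  ultimately have cX: "c X = c (N - {j})"
    using third_color_set_eq[OF A] third_color_set_eq[of X] by blast
  show False
  proof (cases "X \<subseteq> A")
    case False
    then show False
      using rainbow_V2_freeD[OF free, of X A "{}"] X A cX coatom_j by auto
  next
    case True
    obtain i where i: "i \<in> A" "i \<notin> X"
      using X by blast
    then have "c (N - {i}) = c {}"
      using coatom_color_empty_iff[of i] A by blast
    then show False
      using rainbow_V2_free_coatom[OF free A(1) i(1), of X] True i A cX coatom_j by auto
  qed
qed

lemma card_add_2_le:
  assumes "finite N"
  shows "card A + 2 \<le> card N"
proof -
  have "N - A \<noteq> {j}"
  proof
    assume "N - A = {j}"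
    then have "A = N - {j}"
      using A(1) by blast
    then show False
      using A(3) by simp
  qed
  then obtain l where "l \<in> N - A" "l \<noteq> j"
    using j_mem j_notin_A by blast
  then have "{j, l} \<subseteq> N - A"
    using j_mem j_notin_A by blast
  then have "2 \<le> card (N - A)"
    using card_mono[of "N - A" "{j, l}"] \<open>l \<noteq> j\<close> assms by simp
  then show ?thesis
    using assms A(1) card_Diff_subset[of A N] card_mono[of N A] finite_subset[of A N] by auto
qed

lemma interval_split_coloring_A: "interval_split_coloring N c A"
proof -
  have above: "c X = c (N - {j})" if "X \<in> interval_oo A N" for X
    using color_above_A that unfolding interval_oo_def by blast
  have outside: "c Y = c {}" if "Y \<in> Pow N - interval_cc A N" for Y
    using color_not_above_A that unfolding interval_cc_def by blast
  show ?thesis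
    unfolding interval_split_coloring_def monochromatic_def
    using above outside A(2,3) coatom_j by simp
qed

end

lemma interval_split_coloring_exists:
  assumes "finite N" and three: "3 \<le> card (c ` interval_co {} N)"
  shows "\<exists>A. A \<subseteq> N \<and> card A + 2 \<le> card N \<and> interval_split_coloring N c A"
proof -
  obtain A where A: "A \<subset> N" "c A \<noteq> c {}" "c A \<noteq> c (N - {j})"
    using exists_other_than_two[OF three, of "c {}" "c (N - {j})"]
    unfolding interval_co_def by blast
  then show ?thesis
    using card_add_2_le[OF A assms(1)] interval_split_coloring_A[OF A] by blast
qed

end

lemma rainbow_V2_free_interval_split:
  assumes "finite N" "rainbow_V2_free N c" "3 \<le> card (c ` interval_co {} N)"
  shows "\<exists>A. A \<subseteq> N \<and> card A + 2 \<le> card N \<and> interval_split_coloring N c A"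
proof -
  obtain i i' where "i \<in> N" "i' \<in> N" "c (N - {i}) \<noteq> c (N - {i'})"
    using coatom_colors_differ[OF assms(2,3)] by blast
  then obtain j where "coatom_two_colors N c j"
    using coatom_two_colorsI[OF assms(2)] by blast
  then show ?thesis
    using coatom_two_colors.interval_split_coloring_exists assms(1,3) by blast
qed

lemma rainbow_V2_free_iff:
  assumes "finite N"
  shows "rainbow_V2_free N c \<longleftrightarrow>
    (\<exists>A. A \<subseteq> N \<and> card A + 2 \<le> card N \<and> interval_split_coloring N c A) \<or>
    card (c ` interval_co {} N) \<le> 2"
proof
  assume "rainbow_V2_free N c"
  then show "(\<exists>A. A \<subseteq> N \<and> card A + 2 \<le> card N \<and> interval_split_coloring N c A) \<or>
      card (c ` interval_co {} N) \<le> 2"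
    using rainbow_V2_free_interval_split[OF assms] by fastforce
next
  assume "(\<exists>A. A \<subseteq> N \<and> card A + 2 \<le> card N \<and> interval_split_coloring N c A) \<or>
      card (c ` interval_co {} N) \<le> 2"
  then show "rainbow_V2_free N c"
    using monochromatic_intervals_rainbow_V2_free few_colors_rainbow_V2_free[OF assms]
    unfolding interval_split_coloring_def by blast
qed

lemma exact_coloring_top_color:
  assumes "exact_coloring n k c"
  shows "c ` interval_co {} {1..n} = {1..k} \<or>
    (c {1..n} \<notin> c ` interval_co {} {1..n} \<and> card (c ` interval_co {} {1..n}) + 1 = k)"
proof -
  have "Bool_lat n = insert {1..n} (interval_co {} {1..n})"
    unfolding Bool_lat_def interval_co_def by blast
  then have colors: "insert (c {1..n}) (c ` interval_co {} {1..n}) = {1..k}"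
    using assms unfolding exact_coloring_def by simp
  have "finite (c ` interval_co {} {1..n})"
    using finite_interval_co[of "{1..n}"] by simp
  then show ?thesis
    using colors card_insert_disjoint[of "c ` interval_co {} {1..n}" "c {1..n}"]
    by (cases "c {1..n} \<in> c ` interval_co {} {1..n}") (auto simp: insert_absorb)
qed

theorem theorem2p3:
  fixes k n :: nat and c :: "nat set \<Rightarrow> nat"
  assumes "k \<ge> 3" and "n \<ge> 2" and "exact_coloring n k c"
  shows "\<not> has_rainbow_V2 n c \<longleftrightarrow>
    ((\<exists>A. A \<subseteq> {1..n} \<and> card A \<le> n - 2 \<and>
        monochromatic c (interval_oo A {1..n}) \<and>
        monochromatic c (Bool_lat n - interval_cc A {1..n}) \<and>
        monochromatic c {A} \<and>
        (\<forall>X\<in>interval_oo A {1..n}. \<forall>Y\<in>Bool_lat n - interval_cc A {1..n}. c X \<noteq> c Y) \<and>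
        (\<forall>X\<in>interval_oo A {1..n}. c X \<noteq> c A) \<and>
        (\<forall>Y\<in>Bool_lat n - interval_cc A {1..n}. c Y \<noteq> c A) \<and>
        (k = 4 \<longrightarrow> c {1..n} \<notin> c ` interval_co {} {1..n}))
     \<or>
     (card (c ` interval_co {} {1..n}) = 2 \<and> c {1..n} \<notin> c ` interval_co {} {1..n}))"
    (is "_ \<longleftrightarrow> ?split \<or> ?two_colors")
proof -
  let ?N = "{1..n}" and ?P = "interval_co {} {1..n}"
  have "monochromatic c {A}" and "card A \<le> n - 2 \<longleftrightarrow> card A + 2 \<le> card ?N" for A
    using \<open>n \<ge> 2\<close> by (auto simp: monochromatic_def)
  then have split_iff: "?split \<longleftrightarrow> (\<exists>A. A \<subseteq> ?N \<and> card A + 2 \<le> card ?N \<and>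
      interval_split_coloring ?N c A \<and> (k = 4 \<longrightarrow> c ?N \<notin> c ` ?P))"
    by (simp add: interval_split_coloring_def Bool_lat_def)
  note top = exact_coloring_top_color[OF assms(3)]
  have "k = 4 \<longrightarrow> c ?N \<notin> c ` ?P" if "interval_split_coloring ?N c A" for A
    using monochromatic_intervals_card_colors[of c A ?N] that top
    unfolding interval_split_coloring_def by auto
  moreover have "card (c ` ?P) \<le> 2 \<longleftrightarrow> ?two_colors"
    using top \<open>k \<ge> 3\<close> by auto
  ultimately show ?thesis
    unfolding has_rainbow_V2_iff rainbow_V2_free_iff[OF finite_atLeastAtMost] split_iff by blast
qed

end
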